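(* For every qubit density matrix $\rho$, $C_g(\rho)+M_g(\rho)\le 1$. Explicitly, writing $\rho=\begin{pmatrix} a & c\\ \bar c & 1-a\end{pmatrix}$ in the computational basis, one has $C_g(\rho)=\frac12\left[1-\sqrt{1-4|c|^2}\right]$ and $M_g(\rho)=\frac12\left\{1+\sqrt{4[a(1-a)-|c|^2]}\right\}$, and equality $C_g(\rho)+M_g(\rho)=1$ holds whenever $a=1/2$ (in particular for all states $\frac{1-p}{2}\mathbb{I}_2+p|\psi_2\rangle\langle\psi_2|$, $p\in[0,1]$, $|\psi_2\rangle=(|0\rangle+|1\rangle)/\sqrt2$).
   Context: Computational basis $\{|0\rangle,|1\rangle\}$ of $\mathbb{C}^2$. Incoherent states are density matrices diagonal in this basis; $\mathcal{I}$ denotes their set. The fidelity is $F(\rho,\sigma)=\left(\mathrm{Tr}\sqrt{\sqrt{\sigma}\rho\sqrt{\sigma}}\right)^2$. The geometric coherence is $C_g(\rho)=1-\max_{\sigma\in\mathcal{I}}F(\rho,\sigma)$. The geometric mixedness of a $d$-dimensional state is $M_g(\rho)=F(\rho,\mathbb{I}/d)=\frac1d\left(\mathrm{Tr}\sqrt{\rho}\right)^2$ (here $d=2$). *)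

theory Defs
  imports "HOL-Analysis.Analysis"
begin

text \<open>Qubit operators: 2x2 complex matrices, indexed by the type 2 (indices 1 and 2,
  where 1 corresponds to the basis vector |0> and 2 to |1>).\<close>

type_synonym qmat = "complex^2^2"

definition adjoint :: "qmat \<Rightarrow> qmat" where
  "adjoint A = (\<chi> i j. cnj (A $ j $ i))"

definition hermitian :: "qmat \<Rightarrow> bool" where
  "hermitian A \<longleftrightarrow> adjoint A = A"

definition qform :: "qmat \<Rightarrow> complex^2 \<Rightarrow> complex" where
  "qform A x = (\<Sum>i\<in>UNIV. \<Sum>j\<in>UNIV. cnj (x $ i) * A $ i $ j * x $ j)"

definition psd :: "qmat \<Rightarrow> bool" where
  "psd A \<longleftrightarrow> hermitian A \<and> (\<forall>x. 0 \<le> Re (qform A x))"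

definition density :: "qmat \<Rightarrow> bool" where
  "density A \<longleftrightarrow> psd A \<and> trace A = 1"

definition msqrt :: "qmat \<Rightarrow> qmat" where
  "msqrt A = (THE B. psd B \<and> B ** B = A)"

definition fidelity :: "qmat \<Rightarrow> qmat \<Rightarrow> real" where
  "fidelity \<rho> \<sigma> = (Re (trace (msqrt (msqrt \<sigma> ** \<rho> ** msqrt \<sigma>)))) ^ 2"

definition incoherent :: "qmat \<Rightarrow> bool" where
  "incoherent \<sigma> \<longleftrightarrow> density \<sigma> \<and> (\<forall>i j. i \<noteq> j \<longrightarrow> \<sigma> $ i $ j = 0)"

definition geom_coherence :: "qmat \<Rightarrow> real" where
  "geom_coherence \<rho> = 1 - Sup {fidelity \<rho> \<sigma> | \<sigma>. incoherent \<sigma>}"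

definition geom_mixedness :: "qmat \<Rightarrow> real" where
  "geom_mixedness \<rho> = fidelity \<rho> (mat (1/2))"

end

theory Submission
  imports Defs
begin

text \<open>Write a qubit state as \<open>\<rho> = [[a, c], [cnj c, 1 - a]]\<close>. For a positive \<open>2\<times>2\<close> matrix,
  Cayley--Hamilton gives \<open>(tr \<surd>A)\<^sup>2 = tr A + 2 \<surd>(det A)\<close>, so the fidelity of \<open>\<rho>\<close> with the
  incoherent state \<open>diag(s, 1 - s)\<close> is \<open>s a + (1 - s)(1 - a) + 2 \<surd>(s (1 - s) det \<rho>)\<close>.
  Maximising over \<open>s\<close> (an AM-GM equality case) yields \<open>(1 + \<surd>(1 - 4 |c|\<^sup>2)) / 2\<close>, and
  \<open>s = 1/2\<close> yields \<open>M\<^sub>g = (1 + \<surd>(4 det \<rho>)) / 2\<close>. Since \<open>4 det \<rho> = 1 - 4 |c|\<^sup>2 - (2a - 1)\<^sup>2\<close>,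
  the sum \<open>C\<^sub>g + M\<^sub>g\<close> is at most \<open>1\<close>, with equality when \<open>a = 1/2\<close>.\<close>

definition mat2 :: "complex \<Rightarrow> complex \<Rightarrow> complex \<Rightarrow> complex \<Rightarrow> qmat" where
  "mat2 a b c d = (\<chi> i j. if i = 1 then (if j = 1 then a else b) else (if j = 1 then c else d))"

lemma mat2_nth [simp]:
  "mat2 a b c d $ 1 $ 1 = a" "mat2 a b c d $ 1 $ 2 = b"
  "mat2 a b c d $ 2 $ 1 = c" "mat2 a b c d $ 2 $ 2 = d"
  by (simp_all add: mat2_def)

lemma mat2_entries: "A = mat2 (A$1$1) (A$1$2) (A$2$1) (A$2$2)"
  unfolding mat2_def vec_eq_iff forall_2 by simp

lemma mat2_eq_iff: "mat2 a b c d = mat2 a' b' c' d' \<longleftrightarrow> a = a' \<and> b = b' \<and> c = c' \<and> d = d'"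
  by (metis mat2_nth)

lemma mat2_mult:
  "mat2 a b c d ** mat2 a' b' c' d' = mat2 (a*a' + b*c') (a*b' + b*d') (c*a' + d*c') (c*b' + d*d')"
  by (subst mat2_entries) (simp add: matrix_matrix_mult_def sum_2)

definition herm2 :: "real \<Rightarrow> complex \<Rightarrow> real \<Rightarrow> qmat" where
  "herm2 p q r = mat2 (of_real p) q (cnj q) (of_real r)"

lemma herm2_nth [simp]:
  "herm2 p q r $ 1 $ 1 = of_real p" "herm2 p q r $ 1 $ 2 = q"
  "herm2 p q r $ 2 $ 1 = cnj q" "herm2 p q r $ 2 $ 2 = of_real r"
  by (simp_all add: herm2_def)

lemma herm2_eq_iff: "herm2 p q r = herm2 p' q' r' \<longleftrightarrow> p = p' \<and> q = q' \<and> r = r'"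
  by (auto simp: herm2_def mat2_eq_iff)

lemma trace_herm2 [simp]: "trace (herm2 p q r) = of_real (p + r)"
  by (simp add: trace_def sum_2)

lemma mult_cnj_self: "z * cnj z = of_real ((cmod z)\<^sup>2)" "cnj z * z = of_real ((cmod z)\<^sup>2)"
  by (metis complex_norm_square mult.commute)+

lemma det_herm2 [simp]: "det (herm2 p q r) = of_real (p * r - (cmod q)\<^sup>2)"
  using mult_cnj_self[of q] by (simp add: det_2 mult.commute)

lemma hermitian_herm2: "hermitian (herm2 p q r)"
  by (simp add: hermitian_def adjoint_def vec_eq_iff forall_2)

lemma hermitian_eq_herm2:
  assumes "hermitian A"
  shows "A = herm2 (Re (A$1$1)) (A$1$2) (Re (A$2$2))"
proof -
  have entry: "cnj (A$j$i) = A$i$j" for i j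
  proof -
    have "adjoint A $ i $ j = A $ i $ j" using assms by (simp add: hermitian_def)
    then show ?thesis by (simp add: adjoint_def)
  qed
  have "of_real (Re (A$i$i)) = A$i$i" for i
    using entry[of i i] by (simp add: complex_eq_iff)
  then show ?thesis
    using entry[of 1 2] by (subst mat2_entries) (simp add: herm2_def)
qed

lemma herm2_mult_self:
  "herm2 p q r ** herm2 p q r = herm2 (p\<^sup>2 + (cmod q)\<^sup>2) (of_real (p + r) * q) (r\<^sup>2 + (cmod q)\<^sup>2)"
  unfolding herm2_def mat2_mult mat2_eq_iff
  by (simp add: mult_cnj_self algebra_simps power2_eq_square)

lemma Re_qform_herm2:
  "Re (qform (herm2 p q r) x) = p * (cmod (x$1))\<^sup>2 + r * (cmod (x$2))\<^sup>2 + 2 * Re (cnj (x$1) * q * x$2)"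
proof -
  have diag: "cnj z * of_real t * z = of_real (t * (cmod z)\<^sup>2)" for z t
    using mult_cnj_self[of z] by (simp add: ac_simps)
  have off_diag: "cnj (x$2) * cnj q * x$1 = cnj (cnj (x$1) * q * x$2)"
    by (simp add: ac_simps)
  show ?thesis
    unfolding qform_def sum_2 herm2_nth diag off_diag
    by (simp only: plus_complex.sel Re_complex_of_real cnj.simps)
qed

lemma psd_herm2_iff: "psd (herm2 p q r) \<longleftrightarrow> 0 \<le> p \<and> 0 \<le> r \<and> (cmod q)\<^sup>2 \<le> p * r"
proof
  assume "psd (herm2 p q r)"
  then have form_nonneg: "0 \<le> p * (cmod x)\<^sup>2 + r * (cmod y)\<^sup>2 + 2 * Re (cnj x * q * y)" for x y
    using Re_qform_herm2[of p q r "vector [x, y]"] unfolding psd_def by (metis vector_2)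
  have norm_sq: "cmod z * cmod z = Re z * Re z + Im z * Im z" for z
    by (metis cmod_power2 power2_eq_square)
  have p: "0 \<le> p" using form_nonneg[of 1 0] by simp
  have r: "0 \<le> r" using form_nonneg[of 0 1] by simp
  have r_det: "0 \<le> r * (p * r - (cmod q)\<^sup>2)" using form_nonneg[of "of_real r" "- cnj q"]
    by (simp add: cmod_power2 power2_eq_square algebra_simps norm_sq)
  have p_det: "0 \<le> p * (p * r - (cmod q)\<^sup>2)" using form_nonneg[of "- q" "of_real p"]
    by (simp add: cmod_power2 power2_eq_square algebra_simps norm_sq)
  have zero_diag: "0 \<le> p * (cmod q)\<^sup>2 + r - 2 * (cmod q)\<^sup>2" using form_nonneg[of q "- 1"]
    by (simp add: cmod_power2 power2_eq_square algebra_simps norm_sq)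
  have "(cmod q)\<^sup>2 \<le> p * r"
  proof (cases "r = 0")
    case False
    then show ?thesis using r r_det by (simp add: zero_le_mult_iff)
  next
    case True
    then have "p * (cmod q)\<^sup>2 \<le> 0" using p_det by simp
    then have "(cmod q)\<^sup>2 \<le> 0" using zero_diag True by linarith
    then show ?thesis using True by simp
  qed
  with p r show "0 \<le> p \<and> 0 \<le> r \<and> (cmod q)\<^sup>2 \<le> p * r" by simp
next
  assume pqr: "0 \<le> p \<and> 0 \<le> r \<and> (cmod q)\<^sup>2 \<le> p * r"
  have "0 \<le> Re (qform (herm2 p q r) x)" for x
  proof -
    define X Y where "X = cmod (x$1)" and "Y = cmod (x$2)"
    have "- Re (cnj (x$1) * q * x$2) \<le> cmod (cnj (x$1) * q * x$2)"
      by (metis abs_Re_le_cmod abs_le_D2)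
    also have "\<dots> = cmod q * X * Y"
      by (simp add: X_def Y_def norm_mult)
    also have "\<dots> \<le> sqrt (p * r) * X * Y"
      using pqr by (intro mult_right_mono real_le_rsqrt) (auto simp: X_def Y_def)
    also have "\<dots> = sqrt ((p * X\<^sup>2) * (r * Y\<^sup>2))"
      by (simp add: real_sqrt_mult X_def Y_def)
    also have "\<dots> \<le> (p * X\<^sup>2 + r * Y\<^sup>2) / 2"
      using pqr by (intro arith_geo_mean_sqrt) auto
    finally show ?thesis unfolding Re_qform_herm2 X_def Y_def by (simp add: field_simps)
  qed
  then show "psd (herm2 p q r)" by (simp add: psd_def hermitian_herm2)
qed

lemma psd_eq_herm2:
  assumes "psd A"
  obtains p q r where "A = herm2 p q r" "0 \<le> p" "0 \<le> r" "(cmod q)\<^sup>2 \<le> p * r"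
  using assms hermitian_eq_herm2 psd_herm2_iff unfolding psd_def by metis

text \<open>By Cayley--Hamilton, a positive \<open>B\<close> satisfies \<open>B\<^sup>2 + det B \<cdot> I = tr B \<cdot> B\<close>, where
  \<open>det B = \<surd>(det B\<^sup>2)\<close> and \<open>tr B = \<surd>(tr B\<^sup>2 + 2 det B)\<close>; solving for \<open>B\<close> gives the formula below.\<close>

definition psd_sqrt :: "qmat \<Rightarrow> qmat" where
  "psd_sqrt A = (let d = sqrt (Re (det A)); t = sqrt (Re (trace A) + 2 * d)
                 in (1 / t) *\<^sub>R (A + d *\<^sub>R mat 1))"

lemma psd_sqrt_herm2:
  assumes "d = sqrt (p * r - (cmod q)\<^sup>2)" and "t = sqrt (p + r + 2 * d)"
  shows "psd_sqrt (herm2 p q r) = herm2 ((p + d) / t) (q / of_real t) ((r + d) / t)"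
  unfolding psd_sqrt_def Let_def assms(2) det_herm2 trace_herm2 Re_complex_of_real assms(1)[symmetric]
  by (simp add: vec_eq_iff forall_2 mat_def) (simp add: scaleR_conv_of_real divide_inverse)

lemma psd_sqrt_mult_self:
  assumes "psd B"
  shows "psd_sqrt (B ** B) = B"
proof -
  obtain p q r where B: "B = herm2 p q r" and p: "0 \<le> p" and r: "0 \<le> r"
    and q: "(cmod q)\<^sup>2 \<le> p * r"
    using psd_eq_herm2[OF assms] by blast
  have d: "p * r - (cmod q)\<^sup>2 =
           sqrt ((p\<^sup>2 + (cmod q)\<^sup>2) * (r\<^sup>2 + (cmod q)\<^sup>2) - (cmod (of_real (p + r) * q))\<^sup>2)"
  proof -
    have "cmod (of_real (p + r) * q) = (p + r) * cmod q" using p r by (simp add: norm_mult del: of_real_add)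
    then have "(p\<^sup>2 + (cmod q)\<^sup>2) * (r\<^sup>2 + (cmod q)\<^sup>2) - (cmod (of_real (p + r) * q))\<^sup>2
               = (p * r - (cmod q)\<^sup>2)\<^sup>2"
      by (simp add: algebra_simps power2_eq_square)
    then show ?thesis using q by simp
  qed
  have t: "p + r = sqrt (p\<^sup>2 + (cmod q)\<^sup>2 + (r\<^sup>2 + (cmod q)\<^sup>2) + 2 * (p * r - (cmod q)\<^sup>2))"
  proof -
    have "p\<^sup>2 + (cmod q)\<^sup>2 + (r\<^sup>2 + (cmod q)\<^sup>2) + 2 * (p * r - (cmod q)\<^sup>2) = (p + r)\<^sup>2"
      by (simp add: algebra_simps power2_eq_square)
    then show ?thesis using p r by simp
  qed
  show ?thesis
  proof (cases "p + r = 0")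
    case True
    with p r have "p = 0" "r = 0" by auto
    moreover from this q have "q = 0" by simp
    ultimately show ?thesis by (simp add: B herm2_mult_self psd_sqrt_def vec_eq_iff forall_2)
  next
    case False
    then show ?thesis
      unfolding B herm2_mult_self psd_sqrt_herm2[OF d t] herm2_eq_iff
      by (simp add: field_simps power2_eq_square del: of_real_add)
  qed
qed

lemma herm2_sqrt_mult_self:
  assumes d: "d\<^sup>2 = p * r - (cmod q)\<^sup>2" and t: "t\<^sup>2 = p + r + 2 * d" "t \<noteq> 0"
  defines "S \<equiv> herm2 ((p + d) / t) (q / of_real t) ((r + d) / t)"
  shows "S ** S = herm2 p q r"
proof -
  have "((p + d) / t)\<^sup>2 + (cmod (q / of_real t))\<^sup>2 = ((p + d)\<^sup>2 + (cmod q)\<^sup>2) / t\<^sup>2"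
    using t(2) by (simp add: norm_divide field_simps)
  also have "(p + d)\<^sup>2 + (cmod q)\<^sup>2 = p * t\<^sup>2"
    using d unfolding t(1) by (simp add: algebra_simps power2_eq_square)
  finally have diag1: "((p + d) / t)\<^sup>2 + (cmod (q / of_real t))\<^sup>2 = p"
    using t(2) by simp
  have "((r + d) / t)\<^sup>2 + (cmod (q / of_real t))\<^sup>2 = ((r + d)\<^sup>2 + (cmod q)\<^sup>2) / t\<^sup>2"
    using t(2) by (simp add: norm_divide field_simps)
  also have "(r + d)\<^sup>2 + (cmod q)\<^sup>2 = r * t\<^sup>2"
    using d unfolding t(1) by (simp add: algebra_simps power2_eq_square)
  finally have diag2: "((r + d) / t)\<^sup>2 + (cmod (q / of_real t))\<^sup>2 = r"
    using t(2) by simp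
  have "(p + d) / t + (r + d) / t = t\<^sup>2 / t"
    unfolding t(1) by (simp add: add_divide_distrib)
  also have "\<dots> = t" by (simp add: power2_eq_square)
  finally have off_diag: "of_real ((p + d) / t + (r + d) / t) * (q / of_real t) = q"
    using t(2) by simp
  show ?thesis
    unfolding S_def herm2_mult_self diag1 diag2 off_diag ..
qed

lemma psd_sqrt_is_square_root:
  assumes "psd A"
  shows "psd (psd_sqrt A)" and "psd_sqrt A ** psd_sqrt A = A"
proof -
  obtain p q r where A: "A = herm2 p q r" and p: "0 \<le> p" and r: "0 \<le> r"
    and q: "(cmod q)\<^sup>2 \<le> p * r"
    using psd_eq_herm2[OF assms] by blast
  define d where "d = sqrt (p * r - (cmod q)\<^sup>2)"
  define t where "t = sqrt (p + r + 2 * d)"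
  have d: "0 \<le> d" "d\<^sup>2 = p * r - (cmod q)\<^sup>2" using q by (simp_all add: d_def)
  have t: "0 \<le> t" "t\<^sup>2 = p + r + 2 * d" using p r d by (simp_all add: t_def)
  have S: "psd_sqrt A = herm2 ((p + d) / t) (q / of_real t) ((r + d) / t)"
    unfolding A by (rule psd_sqrt_herm2[OF d_def t_def])
  have "psd (psd_sqrt A) \<and> psd_sqrt A ** psd_sqrt A = A"
  proof (cases "t = 0")
    case True
    with t p r d have "p = 0" "r = 0" by auto
    moreover from this q have "q = 0" by simp
    ultimately show ?thesis unfolding S unfolding A using True by (simp add: psd_herm2_iff herm2_mult_self)
  next
    case False
    have "0 \<le> d * d + d * p + d * r" using p r d by simp
    then have "(cmod q)\<^sup>2 \<le> (p + d) * (r + d)"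
      using q by (simp add: algebra_simps)
    then have "(cmod (q / of_real t))\<^sup>2 \<le> (p + d) / t * ((r + d) / t)"
      by (simp add: norm_divide power_divide divide_right_mono power2_eq_square)
    then show ?thesis
      using p r d t herm2_sqrt_mult_self[OF d(2) t(2) False] unfolding S psd_herm2_iff by (simp add: A)
  qed
  then show "psd (psd_sqrt A)" "psd_sqrt A ** psd_sqrt A = A" by simp_all
qed

lemma msqrt_mult_self:
  assumes "psd B"
  shows "msqrt (B ** B) = B"
  unfolding msqrt_def
proof (rule the_equality)
  fix C assume "psd C \<and> C ** C = B ** B"
  then show "C = B" using psd_sqrt_mult_self assms by metis
qed (use assms in simp)

lemma msqrt_is_square_root:
  assumes "psd A"
  shows "psd (msqrt A)" and "msqrt A ** msqrt A = A"
  using psd_sqrt_is_square_root[OF assms] msqrt_mult_self[of "psd_sqrt A"] by simp_all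

lemma trace_psd_square:
  assumes "psd B"
  shows "(Re (trace B))\<^sup>2 = Re (trace (B ** B)) + 2 * sqrt (Re (det (B ** B)))"
proof -
  obtain p q r where B: "B = herm2 p q r" and q: "(cmod q)\<^sup>2 \<le> p * r"
    using psd_eq_herm2[OF assms] by blast
  have "sqrt (Re (det (B ** B))) = p * r - (cmod q)\<^sup>2"
    using q by (simp add: B det_mul power2_eq_square flip: of_real_mult)
  then show ?thesis
    by (simp add: B herm2_mult_self algebra_simps power2_eq_square)
qed

lemma trace_msqrt_square:
  assumes "psd A"
  shows "(Re (trace (msqrt A)))\<^sup>2 = Re (trace A) + 2 * sqrt (Re (det A))"
  using trace_psd_square[OF msqrt_is_square_root(1)[OF assms]] by (simp add: msqrt_is_square_root(2)[OF assms])

lemma density_iff: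
  "density A \<longleftrightarrow> (\<exists>a c. A = herm2 a c (1 - a) \<and> 0 \<le> a \<and> a \<le> 1 \<and> (cmod c)\<^sup>2 \<le> a * (1 - a))"
proof
  assume "density A"
  then obtain p q r where A: "A = herm2 p q r" "0 \<le> p" "0 \<le> r" "(cmod q)\<^sup>2 \<le> p * r"
    and tr: "trace A = 1" using psd_eq_herm2 unfolding density_def by blast
  from tr have "r = 1 - p" by (simp add: A(1) del: of_real_add)
  with A show "\<exists>a c. A = herm2 a c (1 - a) \<and> 0 \<le> a \<and> a \<le> 1 \<and> (cmod c)\<^sup>2 \<le> a * (1 - a)"
    by (intro exI[of _ p] exI[of _ q]) simp
qed (auto simp: density_def psd_herm2_iff)

lemma incoherent_iff: "incoherent A \<longleftrightarrow> (\<exists>s. A = herm2 s 0 (1 - s) \<and> 0 \<le> s \<and> s \<le> 1)"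
proof -
  have off_diag: "(\<forall>i j. i \<noteq> j \<longrightarrow> A $ i $ j = 0) \<longleftrightarrow> A $ 1 $ 2 = 0 \<and> A $ 2 $ 1 = 0"
    by (auto simp: forall_2)
  show ?thesis
    unfolding incoherent_def density_iff off_diag by (fastforce simp: herm2_eq_iff)
qed

lemma fidelity_diagonal:
  assumes rho: "psd (herm2 a c b)" and "0 \<le> s" "0 \<le> t"
  shows "fidelity (herm2 a c b) (herm2 s 0 t) = s * a + t * b + 2 * sqrt (s * t * (a * b - (cmod c)\<^sup>2))"
proof -
  define S where "S = herm2 (sqrt s) 0 (sqrt t)"
  have "psd S" using assms by (simp add: S_def psd_herm2_iff)
  moreover have "S ** S = herm2 s 0 t" using assms by (simp add: S_def herm2_mult_self)
  ultimately have sqrt_sigma: "msqrt (herm2 s 0 t) = S" using msqrt_mult_self by metis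
  have conj: "S ** herm2 a c b ** S = herm2 (s * a) (of_real (sqrt (s * t)) * c) (t * b)"
    using assms unfolding S_def herm2_def mat2_mult mat2_eq_iff
    by (simp add: real_sqrt_mult algebra_simps flip: of_real_mult)
  have "s * t * (cmod c)\<^sup>2 \<le> s * t * (a * b)"
    using rho assms by (intro mult_left_mono) (auto simp: psd_herm2_iff)
  then have "psd (S ** herm2 a c b ** S)"
    using rho assms unfolding conj psd_herm2_iff
    by (simp add: norm_mult power_mult_distrib algebra_simps)
  then have "fidelity (herm2 a c b) (herm2 s 0 t) =
             Re (trace (S ** herm2 a c b ** S)) + 2 * sqrt (Re (det (S ** herm2 a c b ** S)))"
    unfolding fidelity_def sqrt_sigma by (rule trace_msqrt_square)
  also have "\<dots> = s * a + t * b + 2 * sqrt (s * t * (a * b - (cmod c)\<^sup>2))"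
    unfolding conj using assms by (simp add: norm_mult power_mult_distrib algebra_simps)
  finally show ?thesis .
qed

lemma diagonal_fidelity_max:
  fixes a C :: real
  assumes C: "0 \<le> C" "C \<le> a * (1 - a)"
  defines "g \<equiv> \<lambda>s. s * a + (1 - s) * (1 - a) + 2 * sqrt (s * (1 - s) * (a * (1 - a) - C))"
  shows "\<forall>s\<in>{0..1}. g s \<le> (1 + sqrt (1 - 4 * C)) / 2"
    and "\<exists>s\<in>{0..1}. g s = (1 + sqrt (1 - 4 * C)) / 2"
proof -
  define R where "R = sqrt (1 - 4 * C)"
  define \<alpha> \<beta> where "\<alpha> = (1 - 2 * a + R) / 2" and "\<beta> = (2 * a - 1 + R) / 2"
  have radicand: "(2 * a - 1)\<^sup>2 \<le> 1 - 4 * C" using C(2) by (simp add: algebra_simps power2_eq_square)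
  then have "0 \<le> 1 - 4 * C" by (meson order_trans zero_le_power2)
  then have R: "0 \<le> R" "R\<^sup>2 = 1 - 4 * C" unfolding R_def by simp_all
  have "\<bar>2 * a - 1\<bar> \<le> R"
    unfolding R_def by (metis radicand real_sqrt_abs real_sqrt_le_mono)
  then have "0 \<le> \<alpha>" "0 \<le> \<beta>" "\<alpha> + \<beta> = R" by (simp_all add: \<alpha>_def \<beta>_def field_simps)
  have gap: "g s = (1 + R) / 2 - (\<alpha> * s + \<beta> * (1 - s) - 2 * sqrt (\<alpha> * s * (\<beta> * (1 - s))))" for s
  proof -
    have "\<alpha> * \<beta> = a * (1 - a) - C"
      using R(2) by (simp add: \<alpha>_def \<beta>_def field_simps power2_eq_square)
    then have "\<alpha> * s * (\<beta> * (1 - s)) = s * (1 - s) * (a * (1 - a) - C)"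
      by (metis mult.assoc mult.commute mult.left_commute)
    then show ?thesis by (simp add: g_def \<alpha>_def \<beta>_def field_simps)
  qed
  show "\<forall>s\<in>{0..1}. g s \<le> (1 + sqrt (1 - 4 * C)) / 2"
  proof
    fix s :: real assume "s \<in> {0..1}"
    define x y where "x = \<alpha> * s" and "y = \<beta> * (1 - s)"
    have "0 \<le> x" "0 \<le> y"
      using \<open>s \<in> {0..1}\<close> \<open>0 \<le> \<alpha>\<close> \<open>0 \<le> \<beta>\<close> by (auto simp: x_def y_def)
    then have "0 \<le> x + y - 2 * sqrt (x * y)"
      using arith_geo_mean_sqrt[of x y] by simp
    then show "g s \<le> (1 + sqrt (1 - 4 * C)) / 2"
      using gap[of s, folded x_def y_def] unfolding R_def by linarith
  qed
  \<comment> \<open>Equality case of AM-GM: \<open>s = \<beta> / R\<close> makes \<open>\<alpha> s = \<beta> (1 - s)\<close>; if \<open>R = 0\<close> then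
    \<open>\<alpha> = \<beta> = 0\<close> and the junk value \<open>\<beta> / 0 = 0\<close> still works.\<close>
  define s where "s = \<beta> / R"
  have "\<alpha> * s = \<beta> * (1 - s)"
    using \<open>\<alpha> + \<beta> = R\<close> \<open>0 \<le> \<alpha>\<close> \<open>0 \<le> \<beta>\<close> by (cases "R = 0") (auto simp: s_def field_simps)
  moreover have "0 \<le> \<alpha> * s" "s \<in> {0..1}"
    using \<open>\<alpha> + \<beta> = R\<close> \<open>0 \<le> \<alpha>\<close> \<open>0 \<le> \<beta>\<close> by (auto simp: s_def divide_le_eq_1)
  ultimately have "g s = (1 + R) / 2" using gap[of s] by simp
  then show "\<exists>s\<in>{0..1}. g s = (1 + sqrt (1 - 4 * C)) / 2"
    using \<open>s \<in> {0..1}\<close> unfolding R_def by blast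
qed

lemma geom_coherence_eq:
  assumes "density \<rho>"
  shows "geom_coherence \<rho> = (1 - sqrt (1 - 4 * (cmod (\<rho>$1$2))\<^sup>2)) / 2"
proof -
  obtain a c where \<rho>: "\<rho> = herm2 a c (1 - a)" and "0 \<le> a" "a \<le> 1"
    and c: "(cmod c)\<^sup>2 \<le> a * (1 - a)"
    using assms density_iff by blast
  define g where "g s = s * a + (1 - s) * (1 - a) + 2 * sqrt (s * (1 - s) * (a * (1 - a) - (cmod c)\<^sup>2))"
    for s
  have "psd \<rho>" using assms by (simp add: density_def)
  have "{fidelity \<rho> \<sigma> | \<sigma>. incoherent \<sigma>} = (\<lambda>s. fidelity \<rho> (herm2 s 0 (1 - s))) ` {0..1}"
    unfolding incoherent_iff by (auto simp: image_iff) blast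
  also have "\<dots> = g ` {0..1}"
    using \<open>psd \<rho>\<close> unfolding \<rho> by (intro image_cong) (auto simp: fidelity_diagonal g_def)
  finally have "{fidelity \<rho> \<sigma> | \<sigma>. incoherent \<sigma>} = g ` {0..1}" .
  moreover note diagonal_fidelity_max[OF zero_le_power2 c, folded g_def]
  ultimately have "Sup {fidelity \<rho> \<sigma> | \<sigma>. incoherent \<sigma>} = (1 + sqrt (1 - 4 * (cmod c)\<^sup>2)) / 2"
    by (metis (no_types, lifting) cSup_eq_maximum image_iff)
  then show ?thesis by (simp add: geom_coherence_def \<rho>)
qed

lemma geom_mixedness_eq:
  assumes "density \<rho>"
  shows "geom_mixedness \<rho> = (1 + sqrt (4 * (Re (\<rho>$1$1) * (1 - Re (\<rho>$1$1)) - (cmod (\<rho>$1$2))\<^sup>2))) / 2"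
proof -
  obtain a c where \<rho>: "\<rho> = herm2 a c (1 - a)"
    using assms density_iff by blast
  have "mat (1 / 2) = herm2 (1 / 2) 0 (1 / 2)"
    by (simp add: vec_eq_iff forall_2 mat_def)
  moreover have "psd \<rho>" using assms by (simp add: density_def)
  ultimately have "geom_mixedness \<rho> =
      1 / 2 * a + 1 / 2 * (1 - a) + 2 * sqrt (1 / 2 * (1 / 2) * (a * (1 - a) - (cmod c)\<^sup>2))"
    unfolding geom_mixedness_def \<rho> by (simp add: fidelity_diagonal)
  also have "\<dots> = (1 + sqrt (4 * (a * (1 - a) - (cmod c)\<^sup>2))) / 2"
    unfolding real_sqrt_mult by (simp add: real_sqrt_divide field_simps)
  finally show ?thesis by (simp add: \<rho>)
qed

lemma geom_coherence_add_mixedness_le: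
  assumes "density \<rho>"
  shows "geom_coherence \<rho> + geom_mixedness \<rho> \<le> 1"
proof -
  define a c where "a = Re (\<rho>$1$1)" and "c = cmod (\<rho>$1$2)"
  have "4 * (a * (1 - a) - c\<^sup>2) = 1 - 4 * c\<^sup>2 - (2 * a - 1)\<^sup>2"
    by (simp add: algebra_simps power2_eq_square)
  then have "sqrt (4 * (a * (1 - a) - c\<^sup>2)) \<le> sqrt (1 - 4 * c\<^sup>2)"
    by simp
  then show ?thesis
    unfolding geom_coherence_eq[OF assms] geom_mixedness_eq[OF assms] by (fold a_def c_def) (simp add: field_simps)
qed

lemma geom_coherence_add_mixedness_eq:
  assumes "density \<rho>" and "Re (\<rho>$1$1) = 1 / 2"
  shows "geom_coherence \<rho> + geom_mixedness \<rho> = 1"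
proof -
  have "4 * (1 / 2 * (1 - 1 / 2) - c) = 1 - 4 * c" for c :: real by simp
  then show ?thesis
    using geom_coherence_eq[OF assms(1)] geom_mixedness_eq[OF assms(1)] assms(2) by simp
qed

lemma isotropic_mixture:
  assumes "0 \<le> p" "p \<le> 1"
  shows "mat (complex_of_real ((1 - p) / 2)) + (\<chi> i j. complex_of_real (p / 2)) = herm2 (1 / 2) (of_real (p / 2)) (1 / 2)"
    and "density (herm2 (1 / 2) (of_real (p / 2)) (1 / 2))"
proof -
  show "mat (complex_of_real ((1 - p) / 2)) + (\<chi> i j. complex_of_real (p / 2)) = herm2 (1 / 2) (of_real (p / 2)) (1 / 2)"
    by (simp add: vec_eq_iff forall_2 mat_def field_simps flip: of_real_add of_real_divide)
  have "(p / 2)\<^sup>2 \<le> 1 / 4" using assms by (simp add: power_le_one power_divide)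
  then show "density (herm2 (1 / 2) (of_real (p / 2)) (1 / 2))"
    unfolding density_iff using assms by (intro exI[of _ "1 / 2"] exI[of _ "of_real (p / 2)"]) simp
qed

theorem mainTheorem4:
  shows "(\<forall>\<rho>. density \<rho> \<longrightarrow>
            (let a = Re (\<rho> $ 1 $ 1); c = \<rho> $ 1 $ 2 in
              geom_coherence \<rho> + geom_mixedness \<rho> \<le> 1 \<and>
              geom_coherence \<rho> = (1 - sqrt (1 - 4 * (cmod c)\<^sup>2)) / 2 \<and>
              geom_mixedness \<rho> = (1 + sqrt (4 * (a * (1 - a) - (cmod c)\<^sup>2))) / 2 \<and>
              (a = 1/2 \<longrightarrow> geom_coherence \<rho> + geom_mixedness \<rho> = 1)))
       \<and> (\<forall>p::real. 0 \<le> p \<and> p \<le> 1 \<longrightarrow>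
            (let \<rho> = mat (complex_of_real ((1 - p) / 2)) + (\<chi> i j. complex_of_real (p / 2)) in
              density \<rho> \<and> geom_coherence \<rho> + geom_mixedness \<rho> = 1))"
    (is "(\<forall>\<rho>. _ \<longrightarrow> ?qubit \<rho>) \<and> (\<forall>p. _ \<longrightarrow> ?isotropic p)")
proof (intro conjI allI impI)
  fix \<rho> assume "density \<rho>"
  then show "?qubit \<rho>"
    unfolding Let_def
    using geom_coherence_add_mixedness_le geom_coherence_eq geom_mixedness_eq
      geom_coherence_add_mixedness_eq by blast
next
  fix p :: real assume "0 \<le> p \<and> p \<le> 1"
  then show "?isotropic p"
    using isotropic_mixture geom_coherence_add_mixedness_eq by (simp add: Let_def)
qed

end
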